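(* Let $d,N\in\mathbb{N}$, $h>0$, $\rho\in\mathbb{R}^{d\times d}$ diagonal, $L_d:\mathbb{R}^d\times\mathbb{R}^d\to\mathbb{R}$ differentiable, and $\alpha=1/2$. Define $f^-_{L_d},f^+_{L_d}:\mathbb{R}^d\times\mathbb{R}^d\to\mathbb{R}^d$ by $f^-_{L_d}(u,w)=0$ and $f^+_{L_d}(u,w)=-\rho(w-u)$. Then for any $\{x_k\}_{k=0}^N\subset\mathbb{R}^d$ and $k\in\{1,\dots,N-1\}$, the equation $$D_1L_d(x_k,x_{k+1})+D_2L_d(x_{k-1},x_k)-h\,\rho\,\Delta^{1/2}_-\Delta^{1/2}_-x_k=0$$ holds if and only if the forced discrete Euler–Lagrange equation $$D_1L_d(x_k,x_{k+1})+D_2L_d(x_{k-1},x_k)+f^-_{L_d}(x_k,x_{k+1})+f^+_{L_d}(x_{k-1},x_k)=0$$ holds.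
   Context: $D_1,D_2$ denote partial derivatives of $L_d$ with respect to its first and second arguments. For a sequence $\{z_k\}_{k=0}^N$, $\Delta^\alpha_-z_k:=h^{-\alpha}\sum_{n=0}^{k}\alpha_n z_{k-n}$, where $\alpha_0:=1$ and $\alpha_n:=\frac{-\alpha(1-\alpha)(2-\alpha)\cdots(n-1-\alpha)}{n!}$ for $n\ge1$; $\Delta^\alpha_-\Delta^\alpha_-x_k$ denotes $\Delta^\alpha_-$ applied to the sequence $\{\Delta^\alpha_-x_j\}_{j=0}^N$ at index $k$ (componentwise on $\mathbb{R}^d$). *)

theory Defs
  imports "HOL-Analysis.Analysis"
begin

text \<open>Coefficients alpha_n of the Grunwald-Letnikov type backward difference.\<close>
definition gl_coef :: "real \<Rightarrow> nat \<Rightarrow> real" where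
  "gl_coef a n = (if n = 0 then 1
     else - a * (\<Prod>j\<in>{1..n-1}. (real j - a)) / fact n)"

definition frac_diff_minus ::
  "real \<Rightarrow> real \<Rightarrow> (nat \<Rightarrow> real^'d) \<Rightarrow> nat \<Rightarrow> real^'d" where
  "frac_diff_minus a h z k = (h powr (- a)) *\<^sub>R (\<Sum>n=0..k. gl_coef a n *\<^sub>R z (k - n))"

definition D1 :: "(real^'d \<Rightarrow> real^'d \<Rightarrow> real) \<Rightarrow> real^'d \<Rightarrow> real^'d \<Rightarrow> real^'d" where
  "D1 L u w = (\<chi> i. frechet_derivative (\<lambda>p. L (fst p) (snd p)) (at (u, w)) (axis i 1, 0))"

definition D2 :: "(real^'d \<Rightarrow> real^'d \<Rightarrow> real) \<Rightarrow> real^'d \<Rightarrow> real^'d \<Rightarrow> real^'d" where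
  "D2 L u w = (\<chi> i. frechet_derivative (\<lambda>p. L (fst p) (snd p)) (at (u, w)) (0, axis i 1))"

definition diagonal_mat :: "real^'d^'d \<Rightarrow> bool" where
  "diagonal_mat A \<longleftrightarrow> (\<forall>i j. i \<noteq> j \<longrightarrow> A $ i $ j = 0)"

definition f_minus :: "real^'d \<Rightarrow> real^'d \<Rightarrow> real^'d" where
  "f_minus u w = 0"

definition f_plus :: "real^'d^'d \<Rightarrow> real^'d \<Rightarrow> real^'d \<Rightarrow> real^'d" where
  "f_plus \<rho> u w = - (\<rho> *v (w - u))"

end

theory Submission
  imports Defs "HOL-Computational_Algebra.Formal_Power_Series"
begin

text \<open>The coefficients of the fractional differences are those of the binomial series of
  \<open>(1 - t) powr a\<close>. By Vandermonde's identity, composing differences of orders \<open>a\<close> and \<open>b\<close>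
  gives the difference of order \<open>a + b\<close>; for \<open>a = b = 1/2\<close> this is the ordinary backward
  difference quotient \<open>(x k - x (k - 1)) / h\<close>, so \<open>h \<rho> \<Delta>\<Delta> x k = \<rho> (x k - x (k - 1))\<close>, which
  is exactly \<open>- f_plus \<rho> (x (k - 1)) (x k)\<close>.\<close>

lemma gl_coef_eq_gchoose: "gl_coef a n = (-1) ^ n * (a gchoose n)"
proof (cases n)
  case 0
  then show ?thesis by (simp add: gl_coef_def)
next
  case (Suc m)
  have "(\<Prod>i=0..m. real i - a) = - a * (\<Prod>j\<in>{1..m}. real j - a)"
    by (simp add: prod.atLeast_Suc_atMost)
  moreover have "(\<Prod>i=0..m. real i - a) = (-1) ^ Suc m * (\<Prod>i=0..m. a - real i)"
  proof -
    have "(\<Prod>i=0..m. real i - a) = (\<Prod>i=0..m. (-1) * (a - real i))"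
      by (rule prod.cong) auto
    also have "\<dots> = (-1) ^ card {0..m} * (\<Prod>i=0..m. a - real i)"
      by (simp only: prod.distrib prod_constant)
    finally show ?thesis by simp
  qed
  ultimately show ?thesis
    using Suc by (simp add: gl_coef_def gbinomial_Suc)
qed

lemma gl_coef_convolution:
  "(\<Sum>i=0..n. gl_coef a i * gl_coef b (n - i)) = gl_coef (a + b) n"
proof -
  have "(\<Sum>i=0..n. gl_coef a i * gl_coef b (n - i))
      = (\<Sum>i=0..n. (-1) ^ n * ((a gchoose i) * (b gchoose (n - i))))"
  proof (rule sum.cong)
    fix i assume "i \<in> {0..n}"
    then have "(-1::real) ^ i * (-1) ^ (n - i) = (-1) ^ n"
      by (simp flip: power_add)
    then show "gl_coef a i * gl_coef b (n - i) = (-1) ^ n * ((a gchoose i) * (b gchoose (n - i)))"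
      unfolding gl_coef_eq_gchoose by (metis mult.assoc mult.left_commute)
  qed simp
  then show ?thesis
    by (simp add: gl_coef_eq_gchoose gbinomial_Vandermonde flip: sum_distrib_left)
qed

lemma gl_coef_one: "gl_coef 1 n = (if n = 0 then 1 else if n = 1 then -1 else 0)"
proof -
  have "(\<Prod>j\<in>{1..n-1}. real j - 1) = 0" if "n \<ge> 2"
    using that by (intro prod_zero) (auto intro!: bexI[of _ 1])
  then show ?thesis
    by (auto simp: gl_coef_def)
qed

lemma frac_diff_minus_compose:
  "frac_diff_minus a h (frac_diff_minus b h z) k = frac_diff_minus (a + b) h z k"
proof -
  let ?g = "\<lambda>n m. (gl_coef a n * gl_coef b m) *\<^sub>R z (k - n - m)"
  have "h powr (- (a + b)) = h powr (- a) * h powr (- b)"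
    by (simp flip: powr_add)
  then have "frac_diff_minus a h (frac_diff_minus b h z) k
      = (h powr (- (a + b))) *\<^sub>R (\<Sum>n\<le>k. \<Sum>m\<le>k - n. ?g n m)"
    unfolding frac_diff_minus_def atMost_atLeast0
    by (simp add: scaleR_sum_right powr_add diff_diff_add mult_ac)
  also have "(\<Sum>n\<le>k. \<Sum>m\<le>k - n. ?g n m) = (\<Sum>(n, m)\<in>{(i, j). i + j \<le> k}. ?g n m)"
  proof -
    have "{(i, j). i + j \<le> k} = Sigma {..k} (\<lambda>n. {..k - n})" by auto
    then show ?thesis by (simp add: sum.Sigma)
  qed
  also have "\<dots> = (\<Sum>j\<le>k. \<Sum>i\<le>j. ?g i (j - i))"
    by (rule sum.triangle_reindex_eq)
  also have "\<dots> = (\<Sum>j\<le>k. (\<Sum>i=0..j. gl_coef a i * gl_coef b (j - i)) *\<^sub>R z (k - j))"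
    by (rule sum.cong) (auto simp: scaleR_sum_left atMost_atLeast0 intro!: sum.cong)
  finally show ?thesis
    by (simp add: gl_coef_convolution frac_diff_minus_def atMost_atLeast0)
qed

lemma frac_diff_minus_one:
  assumes "1 \<le> k"
  shows "frac_diff_minus 1 h z k = (h powr (-1)) *\<^sub>R (z k - z (k - 1))"
proof -
  have "(\<Sum>n=0..k. gl_coef 1 n *\<^sub>R z (k - n))
      = (\<Sum>n=0..k. (if n = 0 then z k else 0) + (if n = 1 then - z (k - 1) else 0))"
    by (rule sum.cong) (auto simp: gl_coef_one)
  also have "\<dots> = z k - z (k - 1)"
    using assms by (simp add: sum.distrib)
  finally show ?thesis
    by (simp add: frac_diff_minus_def)
qed

theorem corollary4p12:
  fixes N k :: nat and h :: real and \<rho> :: "real^'d^'d"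
    and L :: "real^'d \<Rightarrow> real^'d \<Rightarrow> real" and x :: "nat \<Rightarrow> real^'d"
  assumes "h > 0" and "diagonal_mat \<rho>"
    and "\<And>p. (\<lambda>q. L (fst q) (snd q)) differentiable (at p)"
    and "1 \<le> k" and "k \<le> N - 1"
  shows "D1 L (x k) (x (k+1)) + D2 L (x (k-1)) (x k)
           - h *\<^sub>R (\<rho> *v frac_diff_minus (1/2) h (frac_diff_minus (1/2) h x) k) = 0
     \<longleftrightarrow> D1 L (x k) (x (k+1)) + D2 L (x (k-1)) (x k)
           + f_minus (x k) (x (k+1)) + f_plus \<rho> (x (k-1)) (x k) = 0"
proof -
  have "frac_diff_minus (1/2) h (frac_diff_minus (1/2) h x) k = (h powr (-1)) *\<^sub>R (x k - x (k - 1))"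
    using frac_diff_minus_compose[of "1/2" h "1/2" x k] frac_diff_minus_one[OF \<open>1 \<le> k\<close>] by simp
  moreover have "h * h powr (-1) = 1"
    using \<open>h > 0\<close> by (simp add: powr_minus)
  ultimately have "h *\<^sub>R (\<rho> *v frac_diff_minus (1/2) h (frac_diff_minus (1/2) h x) k)
      = \<rho> *v (x k - x (k - 1))"
    by (simp add: matrix_vector_mult_scaleR)
  then show ?thesis
    by (simp add: f_minus_def f_plus_def)
qed

end
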